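(* Let $p>1$ and $\lambda_0\in\mathbb{C}$. The map $Q_{\lambda_0}:L^p(F)[t]\to W^{k,p}(E)[t]$ is a right inverse of $P_{\lambda_0}:W^{k,p}(E)[t]\to L^p(F)[t]$, i.e. $P_{\lambda_0}Q_{\lambda_0}=\mathrm{Id}$ on $L^p(F)[t]$.
   Context: $X$ is a compact manifold, $E,F\to X$ Hermitian vector bundles with connections, and $P(D_t)=\sum_{l=0}^kA_{k-l}(x,\partial_x)D_t^l$ a translation-invariant elliptic operator of order $k$ on $\mathbb{R}\times X$ ($D_t=-i\partial_t$), with $P(\lambda)=\sum_lA_{k-l}\lambda^l$ and resolvent $R(\lambda)=P(\lambda)^{-1}:L^p(F)\to W^{k,p}(E)$, meromorphic in $\lambda$. Near $\lambda_0$ write $R(\lambda)=\sum_{m\ge-d(\lambda_0)}R_m(\lambda_0)(\lambda-\lambda_0)^m$, where $d(\lambda_0)$ is the pole order ($0$ if $\lambda_0$ is not a root). $W^{k,p}(E)[t]$ and $L^p(F)[t]$ denote sections over $\mathbb{R}\times X$ polynomial in $t$ with coefficients in these spaces. $P_{\lambda_0}(D_t)=e^{-i\lambda_0t}P(D_t)e^{i\lambda_0t}=\sum_{n\ge0}\frac1{n!}\frac{\partial^nP}{\partial\lambda^n}(\lambda_0)D_t^n$. $D_t^{-1}$ is the endomorphism of $L^p(F)[t]$ sending $\frac{(it)^j}{j!}v$ to $\frac{(it)^{j+1}}{(j+1)!}v$, and $D_t^{m}$ for $m<0$ means $(D_t^{-1})^{-m}$. Define $Q_{\lambda_0}=\sum_{m\ge-d(\lambda_0)}R_m(\lambda_0)D_t^m$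 (a finite sum on each polynomial). *)

theory Defs
  imports "HOL-Analysis.Analysis"
begin

text \<open>
  The distribution has no class of complex normed vector spaces, so we
  introduce one: a real normed vector space with a compatible complex
  scalar multiplication.
\<close>

class complex_normed_vector = real_normed_vector +
  fixes scaleC :: "complex \<Rightarrow> 'a \<Rightarrow> 'a"  (infixr \<open>*\<^sub>C\<close> 75)
  assumes scaleC_add_right: "a *\<^sub>C (x + y) = a *\<^sub>C x + a *\<^sub>C y"
    and scaleC_add_left: "(a + b) *\<^sub>C x = a *\<^sub>C x + b *\<^sub>C x"
    and scaleC_scaleC: "a *\<^sub>C (b *\<^sub>C x) = (a * b) *\<^sub>C x"
    and scaleC_one: "1 *\<^sub>C x = x"
    and scaleR_scaleC: "r *\<^sub>R x = complex_of_real r *\<^sub>C x"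
    and norm_scaleC: "norm (a *\<^sub>C x) = cmod a * norm x"

definition bounded_clinear :: "('a::complex_normed_vector \<Rightarrow> 'b::complex_normed_vector) \<Rightarrow> bool" where
  "bounded_clinear f \<longleftrightarrow> bounded_linear f \<and> (\<forall>a x. f (a *\<^sub>C x) = a *\<^sub>C f x)"

text \<open>
  'v plays the role of W^{k,p}(E), 'w the role of L^p(F).
  An element of V[t] (resp. W[t]) is represented by its coefficient sequence
  c :: nat \<Rightarrow> 'v with finite support, with respect to the basis
  e_j = (i t)^j / j!, i.e. f(t) = sum_j ((i t)^j / j!) c_j.
  In this basis D_t = -i d/dt sends e_j to e_{j-1} (and e_0 to 0),
  and D_t^{-1} sends e_j to e_{j+1}.  Operators on X act coefficientwise.
\<close>

definition Dt :: "(nat \<Rightarrow> 'a) \<Rightarrow> nat \<Rightarrow> 'a" where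
  "Dt c = (\<lambda>j. c (Suc j))"

definition Dt_inv :: "(nat \<Rightarrow> 'a::zero) \<Rightarrow> nat \<Rightarrow> 'a" where
  "Dt_inv c = (\<lambda>j. if j = 0 then 0 else c (j - 1))"

definition Dt_pow :: "int \<Rightarrow> (nat \<Rightarrow> 'a::zero) \<Rightarrow> nat \<Rightarrow> 'a" where
  "Dt_pow m c = (if 0 \<le> m then (Dt ^^ nat m) c else (Dt_inv ^^ nat (- m)) c)"

definition Pop :: "nat \<Rightarrow> (nat \<Rightarrow> 'v \<Rightarrow> 'w::complex_normed_vector) \<Rightarrow> complex \<Rightarrow> 'v \<Rightarrow> 'w" where
  "Pop k A z v = (\<Sum>l\<le>k. z ^ l *\<^sub>C A (k - l) v)"

text \<open>Taylor coefficient (1/n!) d^n P / d\<lambda>^n at z0, written out: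
  sum_l (l choose n) z0^(l-n) A_{k-l}.\<close>
definition Ptaylor :: "nat \<Rightarrow> (nat \<Rightarrow> 'v \<Rightarrow> 'w::complex_normed_vector) \<Rightarrow> complex \<Rightarrow> nat \<Rightarrow> 'v \<Rightarrow> 'w" where
  "Ptaylor k A z0 n v = (\<Sum>l\<le>k. (of_nat (l choose n) * z0 ^ (l - n)) *\<^sub>C A (k - l) v)"

text \<open>P_{z0}(D_t) = sum_n (1/n!) P^{(n)}(z0) D_t^n (terms with n > k vanish).\<close>
definition Pshift :: "nat \<Rightarrow> (nat \<Rightarrow> 'v \<Rightarrow> 'w::complex_normed_vector) \<Rightarrow> complex
    \<Rightarrow> (nat \<Rightarrow> 'v) \<Rightarrow> nat \<Rightarrow> 'w" where
  "Pshift k A z0 u = (\<lambda>j. \<Sum>n\<le>k. Ptaylor k A z0 n ((Dt ^^ n) u j))"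

text \<open>Q_{z0} = sum_{m \<ge> -d} R_m D_t^m, a finite sum on each polynomial
  (only the finitely many m with D_t^m c \<noteq> 0 contribute).\<close>
definition Qop :: "nat \<Rightarrow> (int \<Rightarrow> 'w::zero \<Rightarrow> 'v::comm_monoid_add) \<Rightarrow> (nat \<Rightarrow> 'w) \<Rightarrow> nat \<Rightarrow> 'v" where
  "Qop d Rm c = (\<lambda>j. \<Sum>m\<in>{m. - int d \<le> m \<and> Dt_pow m c \<noteq> (\<lambda>_. 0)}. Rm m (Dt_pow m c j))"

end

theory Submission
  imports Defs
begin

(* In the basis (i t)^j/j!, D_t is the shift, so (P_z0(D_t) Q_z0 c)_j is the sum over s of
   (sum over n + m + d = s of T_n R_m) c_(j+s-d), where P(z) = sum_n (z - z0)^n T_n is the Taylor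
   expansion of P at z0 and R_m are the Laurent coefficients of R. The inner sum is the coefficient
   of (z - z0)^s in (z - z0)^d P(z) R(z) = (z - z0)^d, i.e. the identity for s = d and 0 otherwise;
   the coefficients are identified by uniqueness of power series on the segment z0 + (0, r). *)

text \<open>Unlike the library's norm_sums_le, this needs no completeness.\<close>
lemma norm_sums_le':
  fixes f :: "nat \<Rightarrow> 'a::real_normed_vector"
  assumes "f sums F" "g sums G" "\<And>n. norm (f n) \<le> g n"
  shows "norm F \<le> G"
proof (rule tendsto_le[OF trivial_limit_sequentially])
  show "(\<lambda>n. norm (\<Sum>i<n. f i)) \<longlonglongrightarrow> norm F"
    using assms(1) unfolding sums_def by (rule tendsto_norm)
  show "(\<lambda>n. \<Sum>i<n. g i) \<longlonglongrightarrow> G"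
    using assms(2) unfolding sums_def .
  show "\<forall>\<^sub>F n in sequentially. norm (\<Sum>i<n. f i) \<le> (\<Sum>i<n. g i)"
    by (intro always_eventually allI order_trans[OF norm_sum sum_mono[OF assms(3)]])
qed

lemma powser_coeff_0_eq_0:
  fixes b :: "nat \<Rightarrow> 'a::real_normed_vector"
  assumes r: "r > 0" and sums0: "\<And>x. 0 < x \<Longrightarrow> x < r \<Longrightarrow> (\<lambda>n. x^n *\<^sub>R b n) sums 0"
  shows "b 0 = 0"
proof -
  define x0 where "x0 = r / 2"
  have x0: "0 < x0" "x0 < r" using r by (auto simp: x0_def)
  have "(\<lambda>n. x0^n *\<^sub>R b n) \<longlonglongrightarrow> 0"
    using sums0[OF x0] by (intro summable_LIMSEQ_zero sums_summable)
  then have "Bseq (\<lambda>n. x0^n *\<^sub>R b n)"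
    by (intro convergent_imp_Bseq) (auto simp: convergent_def)
  then obtain M where M: "M > 0" "\<And>n. norm (x0^n *\<^sub>R b n) \<le> M"
    by (auto elim: BseqE)
  have bound: "norm (b 0) \<le> 2 * M * q" if q: "0 < q" "q \<le> 1/2" for q
  proof -
    define x where "x = q * x0"
    have "0 < x"
      using q x0 by (simp add: x_def)
    moreover have "x < r"
      using x0 mult_right_mono[OF q(2) less_imp_le[OF x0(1)]] unfolding x_def by linarith
    ultimately have "(\<lambda>n. x^Suc n *\<^sub>R b (Suc n)) sums (- b 0)"
      using sums0 sums_Suc_iff[of "\<lambda>n. x^n *\<^sub>R b n" "- b 0"] by simp
    moreover have "(\<lambda>n. M * q * q^n) sums (M * q / (1 - q))"
      using q sums_mult[OF geometric_sums, of q "M * q"] by simp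
    moreover have "norm (x^Suc n *\<^sub>R b (Suc n)) \<le> M * q * q^n" for n
    proof -
      have "norm (x^Suc n *\<^sub>R b (Suc n)) = q^Suc n * norm (x0^Suc n *\<^sub>R b (Suc n))"
        using q x0 by (simp add: x_def power_mult_distrib)
      also have "\<dots> \<le> q^Suc n * M"
        using q by (intro mult_left_mono M(2)) simp
      finally show ?thesis by (simp add: algebra_simps)
    qed
    ultimately have "norm (- b 0) \<le> M * q / (1 - q)"
      by (rule norm_sums_le')
    also have "\<dots> \<le> 2 * M * q"
      using q M by (simp add: field_simps)
    finally show ?thesis by simp
  qed
  have "((\<lambda>q. 2 * M * q) \<longlongrightarrow> 0) (at_right 0)"
    by (intro tendsto_eq_intros) (auto intro: tendsto_ident_at)
  moreover have "\<forall>\<^sub>F q in at_right 0. q \<in> {0<..<1/2::real}"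
    by (rule eventually_at_right_real) simp
  then have "\<forall>\<^sub>F q in at_right 0. norm (b 0) \<le> 2 * M * q"
    by eventually_elim (auto intro: bound)
  ultimately have "norm (b 0) \<le> 0"
    by (rule tendsto_lowerbound) simp
  then show ?thesis by simp
qed

lemma powser_coeffs_eq_0:
  fixes a :: "nat \<Rightarrow> 'a::real_normed_vector"
  assumes r: "r > 0" and sums0: "\<And>x. 0 < x \<Longrightarrow> x < r \<Longrightarrow> (\<lambda>n. x^n *\<^sub>R a n) sums 0"
  shows "a N = 0"
proof (induction N rule: less_induct)
  case (less N)
  have "(\<lambda>n. x^n *\<^sub>R a (n + N)) sums 0" if x: "0 < x" "x < r" for x
  proof -
    have "(\<lambda>n. x^(n + N) *\<^sub>R a (n + N)) sums 0"
      using sums_zero_iff_shift[of N "\<lambda>n. x^n *\<^sub>R a n"] sums0[OF x] less by simp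
    then have "(\<lambda>n. inverse (x^N) *\<^sub>R (x^(n + N) *\<^sub>R a (n + N))) sums (inverse (x^N) *\<^sub>R 0)"
      by (rule sums_scaleR_right)
    moreover have "(\<lambda>n. inverse (x^N) *\<^sub>R (x^(n + N) *\<^sub>R a (n + N))) = (\<lambda>n. x^n *\<^sub>R a (n + N))"
      using x by (intro ext) (simp add: power_add)
    ultimately show ?thesis by simp
  qed
  from powser_coeff_0_eq_0[OF r this] show ?case by simp
qed

lemma powser_coeffs_unique:
  fixes a b :: "nat \<Rightarrow> 'a::real_normed_vector"
  assumes "r > 0"
    and "\<And>x. 0 < x \<Longrightarrow> x < r \<Longrightarrow> (\<lambda>n. x^n *\<^sub>R a n) sums S x"
    and "\<And>x. 0 < x \<Longrightarrow> x < r \<Longrightarrow> (\<lambda>n. x^n *\<^sub>R b n) sums S x"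
  shows "a = b"
proof
  fix n
  have "(\<lambda>n. x^n *\<^sub>R (a n - b n)) sums 0" if "0 < x" "x < r" for x
    using sums_diff[OF assms(2,3)[OF that]] by (simp add: scaleR_diff_right)
  from powser_coeffs_eq_0[OF assms(1) this] show "a n = b n" by simp
qed

lemma scaleC_zero_left [simp]: "(0::complex) *\<^sub>C (x::'a::complex_normed_vector) = 0"
  using scaleR_scaleC[of 0 x] by simp

lemma scaleC_zero_right [simp]: "a *\<^sub>C (0::'a::complex_normed_vector) = 0"
  using scaleC_add_right[of a "0::'a" 0] by simp

lemma scaleC_sum_right: "a *\<^sub>C sum (f :: _ \<Rightarrow> 'a::complex_normed_vector) S = (\<Sum>x\<in>S. a *\<^sub>C f x)"
  by (induction S rule: infinite_finite_induct) (simp_all add: scaleC_add_right)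

lemma scaleC_sum_left: "sum f S *\<^sub>C (v::'a::complex_normed_vector) = (\<Sum>x\<in>S. f x *\<^sub>C v)"
  by (induction S rule: infinite_finite_induct) (simp_all add: scaleC_add_left)

lemma bounded_linear_scaleC_right: "bounded_linear (\<lambda>x::'a::complex_normed_vector. a *\<^sub>C x)"
proof (rule bounded_linear_intro[where K = "cmod a"])
  fix x y :: 'a and r :: real
  show "a *\<^sub>C (x + y) = a *\<^sub>C x + a *\<^sub>C y"
    by (rule scaleC_add_right)
  show "a *\<^sub>C (r *\<^sub>R x) = r *\<^sub>R (a *\<^sub>C x)"
    by (simp add: scaleR_scaleC scaleC_scaleC mult.commute)
  show "norm (a *\<^sub>C x) \<le> norm x * cmod a"
    by (simp add: norm_scaleC mult.commute)
qed

lemma bounded_clinear_imp_bounded_linear: "bounded_clinear f \<Longrightarrow> bounded_linear f"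
  by (simp add: bounded_clinear_def)

lemma bounded_clinear_scaleC: "bounded_clinear f \<Longrightarrow> f (a *\<^sub>C x) = a *\<^sub>C f x"
  by (simp add: bounded_clinear_def)

lemma bounded_clinear_Ptaylor:
  assumes "\<And>j. bounded_clinear (A j)"
  shows "bounded_clinear (Ptaylor k A z0 n)"
  unfolding bounded_clinear_def
proof
  show "bounded_linear (Ptaylor k A z0 n)"
    unfolding Ptaylor_def[abs_def]
    by (intro bounded_linear_sum bounded_linear_compose[OF bounded_linear_scaleC_right]
        bounded_clinear_imp_bounded_linear assms)
  show "\<forall>a v. Ptaylor k A z0 n (a *\<^sub>C v) = a *\<^sub>C Ptaylor k A z0 n v"
    by (simp add: Ptaylor_def bounded_clinear_scaleC[OF assms] scaleC_sum_right scaleC_scaleC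
        mult.commute)
qed

lemma Pop_eq_Ptaylor_sum:
  "Pop k A z v = (\<Sum>n\<le>k. (z - z0)^n *\<^sub>C Ptaylor k A z0 n v)"
proof -
  have binomial: "(\<Sum>n\<le>k. (z - z0)^n * (of_nat (l choose n) * z0 ^ (l - n))) = z ^ l"
    if "l \<le> k" for l
  proof -
    have "(\<Sum>n\<le>k. (z - z0)^n * (of_nat (l choose n) * z0 ^ (l - n)))
        = (\<Sum>n\<le>l. (z - z0)^n * (of_nat (l choose n) * z0 ^ (l - n)))"
      using that by (intro sum.mono_neutral_right) auto
    also have "\<dots> = ((z - z0) + z0) ^ l"
      unfolding binomial_ring by (simp add: mult_ac)
    finally show ?thesis by simp
  qed
  have "(\<Sum>n\<le>k. (z - z0)^n *\<^sub>C Ptaylor k A z0 n v)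
      = (\<Sum>n\<le>k. \<Sum>l\<le>k. ((z - z0)^n * (of_nat (l choose n) * z0 ^ (l - n))) *\<^sub>C A (k - l) v)"
    unfolding Ptaylor_def by (simp add: scaleC_sum_right scaleC_scaleC)
  also have "\<dots> = (\<Sum>l\<le>k. \<Sum>n\<le>k. ((z - z0)^n * (of_nat (l choose n) * z0 ^ (l - n))) *\<^sub>C A (k - l) v)"
    by (rule sum.swap)
  also have "\<dots> = (\<Sum>l\<le>k. z ^ l *\<^sub>C A (k - l) v)"
    by (intro sum.cong refl) (simp add: scaleC_sum_left[symmetric] binomial)
  finally show ?thesis by (simp add: Pop_def)
qed

lemma sums_operator_poly_mult:
  fixes T :: "nat \<Rightarrow> 'a::complex_normed_vector \<Rightarrow> 'b::complex_normed_vector"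
  assumes T: "\<And>l. bounded_clinear (T l)" and b: "(\<lambda>n. h^n *\<^sub>C b n) sums B"
  shows "(\<lambda>s. h^s *\<^sub>C (\<Sum>l\<le>k. if l \<le> s then T l (b (s - l)) else 0))
           sums (\<Sum>l\<le>k. h^l *\<^sub>C T l B)"
proof -
  define G where "G l s = (if l \<le> s then h^s *\<^sub>C T l (b (s - l)) else 0)" for l s
  have "G l sums (h^l *\<^sub>C T l B)" for l
  proof -
    have "bounded_linear (\<lambda>v. h^l *\<^sub>C T l v)"
      by (intro bounded_linear_compose[OF bounded_linear_scaleC_right]
          bounded_clinear_imp_bounded_linear T)
    from bounded_linear.sums[OF this b]
    have "(\<lambda>n. G l (n + l)) sums (h^l *\<^sub>C T l B)"
      by (simp add: G_def bounded_clinear_scaleC[OF T] scaleC_scaleC power_add mult.commute)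
    then show ?thesis
      by (subst (asm) sums_zero_iff_shift) (auto simp: G_def)
  qed
  then have "(\<lambda>s. \<Sum>l\<le>k. G l s) sums (\<Sum>l\<le>k. h^l *\<^sub>C T l B)"
    by (rule sums_sum)
  then show ?thesis
    by (simp add: G_def scaleC_sum_right if_distrib cong: if_cong)
qed

text \<open>Coefficient of (z - z0)^s in (z - z0)^d P(z) R(z) = (z - z0)^d.\<close>
lemma Ptaylor_Rm_convolution:
  fixes A :: "nat \<Rightarrow> 'v::complex_normed_vector \<Rightarrow> 'w::complex_normed_vector"
    and Rm :: "int \<Rightarrow> 'w \<Rightarrow> 'v"
  assumes A_lin: "\<And>j. bounded_clinear (A j)"
    and r_pos: "r > 0"
    and right_inverse: "\<And>z w. 0 < dist z z0 \<Longrightarrow> dist z z0 < r \<Longrightarrow> Pop k A z (R z w) = w"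
    and laurent: "\<And>z w. 0 < dist z z0 \<Longrightarrow> dist z z0 < r \<Longrightarrow>
          (\<lambda>n. (z - z0) ^ n *\<^sub>C Rm (int n - int d) w) sums ((z - z0) ^ d *\<^sub>C R z w)"
  shows "(\<Sum>l\<le>k. if l \<le> s then Ptaylor k A z0 l (Rm (int s - int l - int d) w) else 0)
           = (if s = d then w else 0)"
proof -
  define a where
    "a s = (\<Sum>l\<le>k. if l \<le> s then Ptaylor k A z0 l (Rm (int s - int l - int d) w) else 0)" for s
  have "a = (\<lambda>s. if s = d then w else 0)"
  proof (rule powser_coeffs_unique[OF r_pos])
    fix x :: real
    assume x: "0 < x" "x < r"
    define z where "z = z0 + complex_of_real x"
    have z: "0 < dist z z0" "dist z z0 < r"
      using x by (simp_all add: z_def dist_norm)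
    have h: "z - z0 = complex_of_real x"
      by (simp add: z_def)
    have "(\<lambda>n. complex_of_real x ^ n *\<^sub>C Rm (int n - int d) w) sums (complex_of_real x ^ d *\<^sub>C R z w)"
      using laurent[OF z] by (simp add: h)
    from sums_operator_poly_mult[OF bounded_clinear_Ptaylor[OF A_lin] this, where k = k]
    have "(\<lambda>s. complex_of_real x ^ s *\<^sub>C a s)
        sums (\<Sum>l\<le>k. complex_of_real x ^ l *\<^sub>C Ptaylor k A z0 l (complex_of_real x ^ d *\<^sub>C R z w))"
      by (simp add: a_def of_nat_diff cong: if_cong)
    also have "(\<Sum>l\<le>k. complex_of_real x ^ l *\<^sub>C Ptaylor k A z0 l (complex_of_real x ^ d *\<^sub>C R z w))
        = complex_of_real x ^ d *\<^sub>C Pop k A z (R z w)"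
      by (simp add: Pop_eq_Ptaylor_sum[of k A z _ z0] h scaleC_sum_right scaleC_scaleC mult.commute
          bounded_clinear_scaleC[OF bounded_clinear_Ptaylor[OF A_lin]])
    finally show "(\<lambda>n. x^n *\<^sub>R a n) sums (x^d *\<^sub>R w)"
      by (simp add: right_inverse[OF z] scaleR_scaleC)
    show "(\<lambda>n. x^n *\<^sub>R (if n = d then w else 0)) sums (x^d *\<^sub>R w)"
      using sums_single[of d "\<lambda>n. x^n *\<^sub>R w"] by (simp add: if_distrib cong: if_cong)
  qed
  then show ?thesis
    by (simp add: a_def fun_eq_iff)
qed

definition zero_ext :: "(nat \<Rightarrow> 'a::zero) \<Rightarrow> int \<Rightarrow> 'a" where
  "zero_ext c t = (if 0 \<le> t then c (nat t) else 0)"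

lemma funpow_Dt_apply: "(Dt ^^ n) u j = u (j + n)"
  by (induction n arbitrary: j) (simp_all add: Dt_def)

lemma funpow_Dt_inv_apply: "(Dt_inv ^^ n) u j = (if n \<le> j then u (j - n) else 0)"
  by (induction n arbitrary: j) (auto simp: Dt_inv_def)

lemma Dt_pow_apply: "Dt_pow m c j = zero_ext c (int j + m)"
  by (auto simp: Dt_pow_def zero_ext_def funpow_Dt_apply funpow_Dt_inv_apply nat_add_distrib
      intro!: arg_cong[where f = c])

lemma Pshift_apply: "Pshift k A z0 u j = (\<Sum>n\<le>k. Ptaylor k A z0 n (u (j + n)))"
  by (simp add: Pshift_def funpow_Dt_apply)

lemma Qop_eq_sum_atLeastLessThan:
  fixes Rm :: "int \<Rightarrow> 'w::zero \<Rightarrow> 'v::comm_monoid_add"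
  assumes Rm0: "\<And>m. Rm m 0 = 0" and c: "\<And>i. N \<le> i \<Longrightarrow> c i = 0"
  shows "Qop d Rm c i = (\<Sum>m\<in>{- int d..<int N}. Rm m (zero_ext c (int i + m)))"
proof -
  let ?M = "{m. - int d \<le> m \<and> Dt_pow m c \<noteq> (\<lambda>_. 0)}"
  have "Dt_pow m c = (\<lambda>_. 0)" if "int N \<le> m" for m
    using that by (intro ext) (auto simp: Dt_pow_apply zero_ext_def intro!: c)
  then have "?M \<subseteq> {- int d..<int N}"
    by (auto simp: not_less[symmetric])
  then have "Qop d Rm c i = (\<Sum>m\<in>{- int d..<int N}. Rm m (Dt_pow m c i))"
    unfolding Qop_def by (intro sum.mono_neutral_left) (auto simp: Rm0)
  then show ?thesis
    by (simp add: Dt_pow_apply)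
qed

lemma Qop_shift_eq_sum:
  fixes Rm :: "int \<Rightarrow> 'w::zero \<Rightarrow> 'v::comm_monoid_add"
  assumes Rm0: "\<And>m. Rm m 0 = 0" and c: "\<And>i. N \<le> i \<Longrightarrow> c i = 0" and K: "n + d + N \<le> K"
  shows "Qop d Rm c (j + n)
    = (\<Sum>s<K. if n \<le> s then Rm (int s - int n - int d) (zero_ext c (int j + int s - int d)) else 0)"
proof -
  have "Qop d Rm c (j + n) = (\<Sum>m\<in>{- int d..<int N}. Rm m (zero_ext c (int (j + n) + m)))"
    by (intro Qop_eq_sum_atLeastLessThan Rm0 c)
  also have "\<dots> = (\<Sum>s\<in>{n..<n + d + N}. Rm (int s - int n - int d) (zero_ext c (int j + int s - int d)))"
    by (rule sum.reindex_bij_witness[of _ "\<lambda>s. int s - int n - int d" "\<lambda>m. nat (m + int n + int d)"])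
      (auto simp: ac_simps)
  also have "\<dots> = (\<Sum>s<K. if n \<le> s then Rm (int s - int n - int d) (zero_ext c (int j + int s - int d)) else 0)"
    using K by (intro sum.mono_neutral_cong_left) (auto simp: zero_ext_def Rm0 c)
  finally show ?thesis .
qed

lemma Pshift_Qop_apply:
  fixes A :: "nat \<Rightarrow> 'v::complex_normed_vector \<Rightarrow> 'w::complex_normed_vector"
    and Rm :: "int \<Rightarrow> 'w \<Rightarrow> 'v"
  assumes A_lin: "\<And>j. bounded_clinear (A j)" and Rm0: "\<And>m. Rm m 0 = 0"
    and c: "\<And>i. N \<le> i \<Longrightarrow> c i = 0" and K: "k + d + N \<le> K"
  shows "Pshift k A z0 (Qop d Rm c) j = (\<Sum>s<K. \<Sum>n\<le>k. if n \<le> s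
            then Ptaylor k A z0 n (Rm (int s - int n - int d) (zero_ext c (int j + int s - int d)))
            else 0)"
proof -
  have T: "linear (Ptaylor k A z0 n)" for n
    by (intro bounded_linear.linear bounded_clinear_imp_bounded_linear bounded_clinear_Ptaylor A_lin)
  have Qop: "Qop d Rm c (j + n)
      = (\<Sum>s<K. if n \<le> s then Rm (int s - int n - int d) (zero_ext c (int j + int s - int d)) else 0)"
    if "n \<le> k" for n
    using that K by (intro Qop_shift_eq_sum Rm0 c) auto
  have "Pshift k A z0 (Qop d Rm c) j = (\<Sum>n\<le>k. \<Sum>s<K. if n \<le> s
            then Ptaylor k A z0 n (Rm (int s - int n - int d) (zero_ext c (int j + int s - int d)))
            else 0)"
    by (auto simp: Pshift_apply Qop linear_sum[OF T] linear_0[OF T] if_distrib[of "Ptaylor k A z0 _"]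
        intro!: sum.cong)
  also have "\<dots> = (\<Sum>s<K. \<Sum>n\<le>k. if n \<le> s
            then Ptaylor k A z0 n (Rm (int s - int n - int d) (zero_ext c (int j + int s - int d)))
            else 0)"
    by (rule sum.swap)
  finally show ?thesis .
qed

theorem lemma3p10:
  fixes k :: nat
    and A :: "nat \<Rightarrow> 'v::complex_normed_vector \<Rightarrow> 'w::complex_normed_vector"
    and R :: "complex \<Rightarrow> 'w \<Rightarrow> 'v"
    and z0 :: complex and r :: real and d :: nat
    and Rm :: "int \<Rightarrow> 'w \<Rightarrow> 'v"
    and c :: "nat \<Rightarrow> 'w"
  assumes A_lin: "\<And>j. bounded_clinear (A j)"
    and R_lin: "\<And>z. 0 < dist z z0 \<Longrightarrow> dist z z0 < r \<Longrightarrow> bounded_clinear (R z)"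
    and Rm_lin: "\<And>m. bounded_clinear (Rm m)"
    and r_pos: "r > 0"
    and inverse: "\<And>z. 0 < dist z z0 \<Longrightarrow> dist z z0 < r \<Longrightarrow>
          (\<forall>w. Pop k A z (R z w) = w) \<and> (\<forall>v. R z (Pop k A z v) = v)"
    and laurent: "\<And>z w. 0 < dist z z0 \<Longrightarrow> dist z z0 < r \<Longrightarrow>
          (\<lambda>n. (z - z0) ^ n *\<^sub>C Rm (int n - int d) w) sums ((z - z0) ^ d *\<^sub>C R z w)"
    and below: "\<And>m. m < - int d \<Longrightarrow> Rm m = (\<lambda>_. 0)"
    and pole_order: "d = 0 \<or> Rm (- int d) \<noteq> (\<lambda>_. 0)"
    and poly: "finite {j. c j \<noteq> 0}"
  shows "Pshift k A z0 (Qop d Rm c) = c"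
proof
  fix j
  obtain N where "{j. c j \<noteq> 0} \<subseteq> {..<N}"
    using finite_nat_bounded[OF poly] by blast
  then have c: "\<And>i. N \<le> i \<Longrightarrow> c i = 0"
    by fastforce
  have Rm0: "Rm m 0 = 0" for m
    by (intro linear_0 bounded_linear.linear bounded_clinear_imp_bounded_linear Rm_lin)
  have right_inverse: "Pop k A z (R z w) = w" if "0 < dist z z0" "dist z z0 < r" for z w
    using inverse[OF that] by blast
  have "Pshift k A z0 (Qop d Rm c) j = (\<Sum>s<k + d + N + 1. \<Sum>n\<le>k. if n \<le> s
            then Ptaylor k A z0 n (Rm (int s - int n - int d) (zero_ext c (int j + int s - int d)))
            else 0)"
    by (rule Pshift_Qop_apply) (use A_lin Rm0 c in auto)
  also have "\<dots> = (\<Sum>s<k + d + N + 1. if s = d then zero_ext c (int j + int s - int d) else 0)"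
    by (simp only: Ptaylor_Rm_convolution[OF A_lin r_pos right_inverse laurent])
  also have "\<dots> = c j"
    by (simp add: zero_ext_def)
  finally show "Pshift k A z0 (Qop d Rm c) j = c j" .
qed

end
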